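(* Let $G = (V,E)$ be a finite simple graph with $m$ edges and adjacency matrix $A_G$, let $\mu_1 \geq \mu_2$ be the two largest eigenvalues of $A_G$, and let $\mathbf{v}_1, \mathbf{v}_2$ be real unit eigenvectors of $A_G$ for $\mu_1, \mu_2$ respectively, taken from an orthonormal eigenbasis of $A_G$. Let $r > 1$ be real and suppose $$\sum_{ij \in E} (\mu_1 \mathbf{v}_1(i) \mathbf{v}_1(j) + \mu_2 \mathbf{v}_2(i) \mathbf{v}_2(j))^2 \leq \frac{r - 1}{r} \sum_{i, j \in V} (\mu_1 \mathbf{v}_1(i) \mathbf{v}_1(j) + \mu_2 \mathbf{v}_2(i) \mathbf{v}_2(j))^2,$$ or equivalently, with $K = \frac{r - 1}{r} J - A_G$, $$\mu_1^2 (\mathbf{v}_1 \circ \mathbf{v}_1)^T K (\mathbf{v}_1 \circ \mathbf{v}_1) + \mu_2^2 (\mathbf{v}_2 \circ \mathbf{v}_2)^T K (\mathbf{v}_2 \circ \mathbf{v}_2) + 2 \mu_1\mu_2 (\mathbf{v}_1 \circ \mathbf{v}_2)^T K (\mathbf{v}_1 \circ \mathbf{v}_2) \geq 0.$$ Then $$\mu_1^2 + \mu_2^2 \leq \frac{r - 1}{r} \cdot 2m.$$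
   Context: $J$ denotes the all-ones $V\times V$ matrix. For vectors $\mathbf{x}, \mathbf{y} \in \mathbb{R}^V$, $\mathbf{x} \circ \mathbf{y}$ is the entrywise product, $(\mathbf{x}\circ\mathbf{y})(i) = \mathbf{x}(i)\mathbf{y}(i)$. The sum over $ij \in E$ ranges over edges; the sum over $i,j\in V$ ranges over all ordered pairs. *)

theory Defs
  imports "HOL-Analysis.Analysis"
begin

definition simple_graph :: "('n::finite \<Rightarrow> 'n \<Rightarrow> bool) \<Rightarrow> bool" where
  "simple_graph E \<longleftrightarrow> (\<forall>i j. E i j \<longrightarrow> E j i) \<and> (\<forall>i. \<not> E i i)"

definition adj_matrix :: "('n::finite \<Rightarrow> 'n \<Rightarrow> bool) \<Rightarrow> real^'n^'n" where
  "adj_matrix E = (\<chi> i j. if E i j then 1 else 0)"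

definition num_edges :: "('n::finite \<Rightarrow> 'n \<Rightarrow> bool) \<Rightarrow> nat" where
  "num_edges E = card {{i, j} | i j. E i j}"

definition orthonormal_eigenbasis ::
  "real^'n^'n \<Rightarrow> ('n::finite \<Rightarrow> real^'n) \<Rightarrow> ('n \<Rightarrow> real) \<Rightarrow> bool" where
  "orthonormal_eigenbasis M b lam \<longleftrightarrow>
     (\<forall>k l. b k \<bullet> b l = (if k = l then 1 else 0)) \<and>
     (\<forall>k. M *v b k = lam k *\<^sub>R b k)"

end

theory Submission
  imports Defs
begin

text \<open>Let \<open>W = \<mu>\<^sub>1 v\<^sub>1 v\<^sub>1\<^sup>T + \<mu>\<^sub>2 v\<^sub>2 v\<^sub>2\<^sup>T\<close> and \<open>s = \<mu>\<^sub>1\<^sup>2 + \<mu>\<^sub>2\<^sup>2\<close>.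
  By orthonormality \<open>\<Sum>\<^sub>i\<^sub>j W\<^sub>i\<^sub>j\<^sup>2 = s\<close>, and since \<open>v\<^sub>1, v\<^sub>2\<close> are eigenvectors,
  the sum of \<open>W\<^sub>i\<^sub>j\<close> over the \<open>2m\<close> ordered edges is
  \<open>\<mu>\<^sub>1 v\<^sub>1\<^sup>T A v\<^sub>1 + \<mu>\<^sub>2 v\<^sub>2\<^sup>T A v\<^sub>2 = s\<close> as well. Cauchy-Schwarz over the edges and the hypothesis give
  \<open>s\<^sup>2 \<le> 2m \<Sum>\<^sub>E W\<^sub>i\<^sub>j\<^sup>2 \<le> 2m (r - 1)/r s\<close>, hence \<open>s \<le> (r - 1)/r 2m\<close>.\<close>

lemma card_directed_edges:
  assumes "simple_graph E"
  shows "card {(i, j). E i j} = 2 * num_edges E"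
proof -
  let ?S = "{(i, j). E i j}"
  let ?edge = "\<lambda>p. {fst p, snd p}"
  have edges: "{{i, j} | i j. E i j} = ?edge ` ?S"
    by (auto simp: image_iff) blast+
  have orientations: "{p \<in> ?S. ?edge p = e} = {(i, j), (j, i)}" if "E i j" "e = {i, j}" for i j e
    using that assms unfolding simple_graph_def by (auto simp: doubleton_eq_iff)
  have "card ?S = (\<Sum>e\<in>?edge ` ?S. \<Sum>p\<in>{p \<in> ?S. ?edge p = e}. 1)"
    unfolding card_eq_sum by (rule sum.group[symmetric]) auto
  also have "\<dots> = (\<Sum>e\<in>?edge ` ?S. 2)"
  proof (rule sum.cong[OF refl])
    fix e assume "e \<in> ?edge ` ?S"
    then obtain i j where ij: "E i j" "e = {i, j}" by auto
    then have "i \<noteq> j" using assms unfolding simple_graph_def by auto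
    then show "(\<Sum>p\<in>{p \<in> ?S. ?edge p = e}. 1) = 2" using orientations[OF ij] by simp
  qed
  also have "\<dots> = 2 * num_edges E" unfolding num_edges_def edges by simp
  finally show ?thesis .
qed

lemma sum_directed_edges_eq_inner_adj:
  "(\<Sum>(i, j)\<in>{(i, j). E i j}. x $ i * y $ j) = x \<bullet> (adj_matrix E *v y)"
proof -
  have "x \<bullet> (adj_matrix E *v y) = (\<Sum>i\<in>UNIV. \<Sum>j\<in>UNIV. if E i j then x $ i * y $ j else 0)"
    unfolding inner_vec_def adj_matrix_def matrix_vector_mult_def
    by (simp add: sum_distrib_left if_distrib[of "\<lambda>a. a * _"] if_distrib[of "\<lambda>a. _ * a"]
        cong: if_cong)
  also have "\<dots> = (\<Sum>(i, j)\<in>UNIV. if E i j then x $ i * y $ j else 0)"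
    by (simp add: sum.cartesian_product)
  also have "\<dots> = (\<Sum>(i, j)\<in>{(i, j). E i j}. x $ i * y $ j)"
    by (simp add: sum.If_cases case_prod_beta split_def)
  finally show ?thesis ..
qed

lemma orthonormal_eigenbasis_inner_mult:
  assumes "orthonormal_eigenbasis M b lam"
  shows "b k \<bullet> (M *v b l) = (if k = l then lam k else 0)"
  using assms unfolding orthonormal_eigenbasis_def by simp

lemma sum_sum_rank_two_square:
  fixes u v :: "real^'n"
  shows "(\<Sum>i\<in>UNIV. \<Sum>j\<in>UNIV. (a * u $ i * u $ j + c * v $ i * v $ j)\<^sup>2)
    = a\<^sup>2 * (u \<bullet> u)\<^sup>2 + 2 * a * c * (u \<bullet> v)\<^sup>2 + c\<^sup>2 * (v \<bullet> v)\<^sup>2"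
proof -
  have "(\<Sum>i\<in>UNIV. \<Sum>j\<in>UNIV. (a * u $ i * u $ j + c * v $ i * v $ j)\<^sup>2)
     = a\<^sup>2 * ((\<Sum>i\<in>UNIV. u $ i * u $ i) * (\<Sum>j\<in>UNIV. u $ j * u $ j))
     + 2 * a * c * ((\<Sum>i\<in>UNIV. u $ i * v $ i) * (\<Sum>j\<in>UNIV. u $ j * v $ j))
     + c\<^sup>2 * ((\<Sum>i\<in>UNIV. v $ i * v $ i) * (\<Sum>j\<in>UNIV. v $ j * v $ j))"
    unfolding sum_product
    by (simp add: sum_distrib_left sum.distrib[symmetric] algebra_simps power2_eq_square)
  then show ?thesis by (simp add: inner_vec_def power2_eq_square)
qed

lemma le_of_square_le_mult:
  fixes s T c N :: real
  assumes "s\<^sup>2 \<le> T * N" "T \<le> c * s" "0 \<le> c" "0 \<le> N"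
  shows "s \<le> c * N"
proof (cases "s > 0")
  case True
  have "s * s \<le> s * (c * N)"
    using assms(1) mult_right_mono[OF assms(2,4)] by (simp add: power2_eq_square algebra_simps)
  then show ?thesis using True by simp
next
  case False
  then show ?thesis using assms(3,4) by (meson mult_nonneg_nonneg not_le order_trans)
qed

theorem lemma2p2:
  fixes E :: "'n::finite \<Rightarrow> 'n \<Rightarrow> bool"
    and b :: "'n \<Rightarrow> real^'n" and lam :: "'n \<Rightarrow> real"
    and k1 k2 :: 'n and r :: real
  assumes "simple_graph E"
    and "orthonormal_eigenbasis (adj_matrix E) b lam"
    and "k1 \<noteq> k2"
    and "\<forall>k. lam k \<le> lam k1"
    and "\<forall>k. k \<noteq> k1 \<longrightarrow> lam k \<le> lam k2"
    and "r > 1"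
    and "(\<Sum>(i, j) \<in> {(i, j). E i j}.
            (lam k1 * (b k1 $ i) * (b k1 $ j) + lam k2 * (b k2 $ i) * (b k2 $ j))\<^sup>2)
         \<le> (r - 1) / r * (\<Sum>i\<in>UNIV. \<Sum>j\<in>UNIV.
            (lam k1 * (b k1 $ i) * (b k1 $ j) + lam k2 * (b k2 $ i) * (b k2 $ j))\<^sup>2)"
  shows "(lam k1)\<^sup>2 + (lam k2)\<^sup>2 \<le> (r - 1) / r * (2 * real (num_edges E))"
proof -
  define W where "W i j = lam k1 * b k1 $ i * b k1 $ j + lam k2 * b k2 $ i * b k2 $ j" for i j
  define S where "S = {(i, j). E i j}"
  define s where "s = (lam k1)\<^sup>2 + (lam k2)\<^sup>2"
  have "(\<Sum>(i, j)\<in>S. W i j) = lam k1 * (b k1 \<bullet> (adj_matrix E *v b k1))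
      + lam k2 * (b k2 \<bullet> (adj_matrix E *v b k2))"
    unfolding W_def S_def sum_directed_edges_eq_inner_adj[symmetric]
    by (simp add: sum.distrib sum_distrib_left case_prod_beta mult.assoc)
  then have edge_sum: "(\<Sum>(i, j)\<in>S. W i j) = s"
    unfolding s_def orthonormal_eigenbasis_inner_mult[OF assms(2)] by (simp add: power2_eq_square)
  have "(\<Sum>i\<in>UNIV. \<Sum>j\<in>UNIV. (W i j)\<^sup>2) = s"
    using assms(2,3) unfolding W_def s_def sum_sum_rank_two_square orthonormal_eigenbasis_def
    by simp
  then have edge_squares: "(\<Sum>(i, j)\<in>S. (W i j)\<^sup>2) \<le> (r - 1) / r * s"
    using assms(7) unfolding W_def S_def by simp
  have "s\<^sup>2 \<le> (\<Sum>(i, j)\<in>S. (W i j)\<^sup>2) * real (card S)"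
    using sum_squared_le_sum_of_squares[of "\<lambda>(i, j). W i j" S]
    unfolding case_prod_unfold edge_sum[unfolded case_prod_unfold] .
  then have "s \<le> (r - 1) / r * real (card S)"
    using le_of_square_le_mult[OF _ edge_squares] assms(6) by simp
  then show ?thesis
    unfolding s_def S_def card_directed_edges[OF assms(1)] by simp
qed

end
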